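(* Let $i\geq1$ and let $T$ be an SSRT of partition shape $\lambda$ such that $\lambda$ has an addable node in column $i+1$. Then, as multisets, $$H_i(\mathrm{tjdt}_{i+1}(T))\cup\{f_{i+1}(T)\}=H_{i+1}(T).$$
   Context: SSRTs (French convention, rows numbered from bottom, $(p,q)$ = row $p$, column $q$): fillings of a partition shape by positive integers weakly decreasing along rows left to right and strictly decreasing up columns. Backward jeu de taquin slide $\mathrm{jdt}_j(T)$ from the addable node in column $j$: the empty box $c=(p,q)$, starting at the addable node, is filled by sliding in the entry from whichever of $(p-1,q)$, $(p,q-1)$ (that exist) holds the smaller entry, ties going to $(p-1,q)$; this repeats until the empty box is $(1,1)$. $H_j(T)$ denotes the multiset of entries of $T$ that move horizontally during the computation of $\mathrm{jdt}_j(T)$, and $H_1(T)=\varnothing$. With $T_{(p,q)}=0$ outside $\lambda$ and $T_{(0,q)}=\infty$, $f_{i+1}(T)=T_{(r,i)}$ where $r$ is the largest integer with $(r,i)\in\lambda$ and $T_{(r,i)}<T_{(r-1,i+1)}$ (the first entry moving horizontally in $\mathrm{jdt}_{i+1}(T)$), and $\mathrm{tjdt}_{i+1}(T)$ is obtained from $T$ by removing $T_{(r,i)}$ and sliding all entries above it in column $i$ down by one row. *)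

theory Defs
  imports "HOL-Library.Multiset"
begin

(* French convention: a cell is (p,q) = (row p, column q), rows numbered from the bottom,
   both indices starting at 1. A partition shape is a finite down-left closed set of cells. *)

definition is_shape :: "(nat \<times> nat) set \<Rightarrow> bool" where
  "is_shape D \<longleftrightarrow> finite D \<and> (\<forall>(p,q)\<in>D. 1 \<le> p \<and> 1 \<le> q) \<and>
     (\<forall>p q p' q'. (p,q) \<in> D \<and> 1 \<le> p' \<and> p' \<le> p \<and> 1 \<le> q' \<and> q' \<le> q \<longrightarrow> (p',q') \<in> D)"

definition ssrt :: "(nat \<times> nat) set \<Rightarrow> (nat \<times> nat \<Rightarrow> nat) \<Rightarrow> bool" where
  "ssrt D T \<longleftrightarrow> is_shape D \<and> (\<forall>c\<in>D. 1 \<le> T c) \<and>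
     (\<forall>p q. (p,q) \<in> D \<and> (p,q+1) \<in> D \<longrightarrow> T (p,q+1) \<le> T (p,q)) \<and>
     (\<forall>p q. (p,q) \<in> D \<and> (p+1,q) \<in> D \<longrightarrow> T (p+1,q) < T (p,q))"

definition addable :: "(nat \<times> nat) set \<Rightarrow> nat \<times> nat \<Rightarrow> bool" where
  "addable D c \<longleftrightarrow> fst c \<ge> 1 \<and> snd c \<ge> 1 \<and> c \<notin> D \<and> is_shape (insert c D)"

definition tv :: "(nat \<times> nat) set \<Rightarrow> (nat \<times> nat \<Rightarrow> nat) \<Rightarrow> nat \<times> nat \<Rightarrow> nat" where
  "tv D T c = (if c \<in> D then T c else 0)"

(* multiset of entries moving horizontally during the backward jdt slide whose
   empty box is currently at (p,q); ties go to the vertical move *)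
function hmoves :: "(nat \<times> nat) set \<Rightarrow> (nat \<times> nat \<Rightarrow> nat) \<Rightarrow> nat \<Rightarrow> nat \<Rightarrow> nat multiset" where
  "hmoves D T p q =
    (if 2 \<le> p \<and> (p-1,q) \<in> D \<and> 2 \<le> q \<and> (p,q-1) \<in> D then
       (if T (p,q-1) < T (p-1,q) then add_mset (T (p,q-1)) (hmoves D T p (q-1))
        else hmoves D T (p-1) q)
     else if 2 \<le> p \<and> (p-1,q) \<in> D then hmoves D T (p-1) q
     else if 2 \<le> q \<and> (p,q-1) \<in> D then add_mset (T (p,q-1)) (hmoves D T p (q-1))
     else {#})"
  by pat_completeness auto
termination by (relation "measure (\<lambda>(D,T,p,q). p + q)") auto

definition H :: "(nat \<times> nat) set \<Rightarrow> (nat \<times> nat \<Rightarrow> nat) \<Rightarrow> nat \<Rightarrow> nat multiset" where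
  "H D T j = (if j = 1 then {#} else hmoves D T (THE p. addable D (p,j)) j)"

(* r in the definition of f_{i+1}: largest r with (r,i) in the shape and
   T(r,i) < T(r-1,i+1), where T(0,q) = infinity and T = 0 outside the shape *)
definition frow :: "(nat \<times> nat) set \<Rightarrow> (nat \<times> nat \<Rightarrow> nat) \<Rightarrow> nat \<Rightarrow> nat" where
  "frow D T i = (GREATEST r. (r,i) \<in> D \<and> (r = 1 \<or> tv D T (r,i) < tv D T (r-1,i+1)))"

definition f :: "(nat \<times> nat) set \<Rightarrow> (nat \<times> nat \<Rightarrow> nat) \<Rightarrow> nat \<Rightarrow> nat" where
  "f D T j = T (frow D T (j-1), j-1)"

definition colheight :: "(nat \<times> nat) set \<Rightarrow> nat \<Rightarrow> nat" where
  "colheight D q = card {p. (p,q) \<in> D}"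

definition tjdt_shape :: "(nat \<times> nat) set \<Rightarrow> nat \<Rightarrow> (nat \<times> nat) set" where
  "tjdt_shape D j = D - {(colheight D (j-1), j-1)}"

definition tjdt :: "(nat \<times> nat) set \<Rightarrow> (nat \<times> nat \<Rightarrow> nat) \<Rightarrow> nat \<Rightarrow> (nat \<times> nat \<Rightarrow> nat)" where
  "tjdt D T j = (\<lambda>(p,q). if q = j-1 \<and> frow D T (j-1) \<le> p then T (p+1,q) else T (p,q))"

end

theory Submission
  imports Defs
begin

text \<open>In \<open>jdt\<^sub>i\<^sub>+\<^sub>1(T)\<close> the empty box starts at the addable node \<open>(p\<^sub>0, i+1)\<close> and
  moves straight down column \<open>i+1\<close> until it reaches the row \<open>r\<close> defining \<open>f\<^sub>i\<^sub>+\<^sub>1(T)\<close>;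
  there the first horizontal move brings in \<open>T(r,i) = f\<^sub>i\<^sub>+\<^sub>1(T)\<close>, and the rest of the
  slide is the slide of \<open>T\<close> starting from \<open>(r,i)\<close>.  In \<open>tjdt\<^sub>i\<^sub>+\<^sub>1(T)\<close> the addable
  node of column \<open>i\<close> is the old top cell of that column.  Above row \<open>r\<close> the entries of
  column \<open>i\<close> have moved down one row, so each of them is at most its new left neighbour
  (rows weakly decrease) and the empty box again moves straight down to \<open>(r,i)\<close>.  Weakly
  south-west of \<open>(r,i)\<close> the two fillings agree, so both slides continue identically.\<close>

declare hmoves.simps[simp del]

lemma hmoves_first_column: "hmoves D T p 1 = {#}"
  by (induction p) (subst hmoves.simps; simp)+

lemma hmoves_vertical_step:
  assumes "2 \<le> p" "(p-1,q) \<in> D" "\<not> (2 \<le> q \<and> (p,q-1) \<in> D \<and> T (p,q-1) < T (p-1,q))"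
  shows "hmoves D T p q = hmoves D T (p-1) q"
  using assms by (subst hmoves.simps) auto

lemma hmoves_horizontal_step:
  assumes "2 \<le> q" "(p,q-1) \<in> D" "2 \<le> p \<and> (p-1,q) \<in> D \<longrightarrow> T (p,q-1) < T (p-1,q)"
  shows "hmoves D T p q = add_mset (T (p,q-1)) (hmoves D T p (q-1))"
  using assms by (subst hmoves.simps) auto

lemma hmoves_vertical_run:
  assumes "1 \<le> r" "r \<le> s"
    and "\<And>p. r < p \<Longrightarrow> p \<le> s \<Longrightarrow>
           (p-1,q) \<in> D \<and> \<not> (2 \<le> q \<and> (p,q-1) \<in> D \<and> T (p,q-1) < T (p-1,q))"
  shows "hmoves D T s q = hmoves D T r q"
  using assms(2)
proof (induction s rule: dec_induct)
  case (step n)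
  have "hmoves D T (Suc n) q = hmoves D T n q"
    using hmoves_vertical_step[of "Suc n"] assms(3)[of "Suc n"] assms(1) step.hyps by simp
  then show ?case using step.IH by simp
qed simp

lemma hmoves_cong:
  assumes "\<And>a b. a \<le> p \<Longrightarrow> b \<le> q \<Longrightarrow> (a,b) \<noteq> (p,q) \<Longrightarrow>
             ((a,b) \<in> D' \<longleftrightarrow> (a,b) \<in> D) \<and> T' (a,b) = T (a,b)"
  shows "hmoves D' T' p q = hmoves D T p q"
  using assms
proof (induction "p + q" arbitrary: p q rule: less_induct)
  case less
  have up: "hmoves D' T' (p-1) q = hmoves D T (p-1) q" if "2 \<le> p"
  proof (rule less.hyps)
    show "p - 1 + q < p + q" using that by simp
    fix a b assume "a \<le> p - 1" "b \<le> q" "(a,b) \<noteq> (p-1,q)"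
    then show "((a,b) \<in> D' \<longleftrightarrow> (a,b) \<in> D) \<and> T' (a,b) = T (a,b)"
      using less.prems[of a b] that by auto
  qed
  have left: "hmoves D' T' p (q-1) = hmoves D T p (q-1)" if "2 \<le> q"
  proof (rule less.hyps)
    show "p + (q - 1) < p + q" using that by simp
    fix a b assume "a \<le> p" "b \<le> q - 1" "(a,b) \<noteq> (p,q-1)"
    moreover have "b \<le> q" "(a,b) \<noteq> (p,q)" using \<open>b \<le> q - 1\<close> that by auto
    ultimately show "((a,b) \<in> D' \<longleftrightarrow> (a,b) \<in> D) \<and> T' (a,b) = T (a,b)"
      using less.prems by blast
  qed
  show ?case
    using up left less.prems[of "p-1" q] less.prems[of p "q-1"]
    by (subst (1 2) hmoves.simps) auto
qed

lemma is_shape_downclosed: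
  assumes "is_shape D" "(p,q) \<in> D" "1 \<le> p'" "p' \<le> p" "1 \<le> q'" "q' \<le> q"
  shows "(p',q') \<in> D"
  using assms unfolding is_shape_def by blast

lemma is_shape_column_iff:
  assumes "is_shape D"
  shows "(a,q) \<in> D \<longleftrightarrow> 1 \<le> a \<and> a \<le> colheight D q"
proof -
  define S where "S = {p. (p,q) \<in> D}"
  have "S \<subseteq> fst ` D" unfolding S_def by force
  then have fin: "finite S"
    using assms finite_subset unfolding is_shape_def by blast
  have pos: "1 \<le> p \<and> 1 \<le> q" if "(p,q) \<in> D" for p
    using assms that unfolding is_shape_def by auto
  have S_max: "S = {1..Max S}" if "S \<noteq> {}"
  proof
    show "S \<subseteq> {1..Max S}" using fin pos unfolding S_def by auto
    have max_in: "(Max S, q) \<in> D" using fin that Max_in unfolding S_def by blast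
    then have "1 \<le> q" using pos by blast
    then show "{1..Max S} \<subseteq> S"
      using is_shape_downclosed[OF assms max_in, of _ q] unfolding S_def by auto
  qed
  have S_card: "S = {1..card S}"
  proof (cases "S = {}")
    case False
    have "card {1..Max S} = Max S" by simp
    then show ?thesis using S_max[OF False] by metis
  qed simp
  have "(a,q) \<in> D \<longleftrightarrow> a \<in> S" unfolding S_def by simp
  then show ?thesis using S_card unfolding colheight_def S_def[symmetric] by (metis atLeastAtMost_iff)
qed

lemma addable_below:
  assumes "addable D (p0,q)" "1 \<le> p" "p < p0"
  shows "(p,q) \<in> D"
  using is_shape_downclosed[of "insert (p0,q) D" p0 q p q] assms
  unfolding addable_def by auto

lemma addable_column_iff:
  assumes "is_shape D" "addable D (p0,q)"
  shows "(p,q) \<in> D \<longleftrightarrow> 1 \<le> p \<and> p < p0"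
proof -
  have "(p0,q) \<notin> D" "1 \<le> p0" "1 \<le> q" using assms(2) unfolding addable_def by auto
  then have "p < p0" if "(p,q) \<in> D"
    using is_shape_downclosed[OF assms(1) that, of p0 q] by (meson not_le order_refl)
  moreover have "1 \<le> p" if "(p,q) \<in> D" using assms(1) that unfolding is_shape_def by auto
  ultimately show ?thesis using addable_below[OF assms(2)] by blast
qed

lemma addable_left_neighbour:
  assumes "addable D (p0,q)" "2 \<le> q"
  shows "(p0,q-1) \<in> D"
proof -
  have "(p0,q-1) \<in> insert (p0,q) D"
    using is_shape_downclosed[of "insert (p0,q) D" p0 q p0 "q-1"] assms
    unfolding addable_def by simp
  moreover have "q - 1 \<noteq> q" using assms(2) by simp
  ultimately show ?thesis by simp
qed

lemma addable_unique:
  assumes "addable D (p,j)" "addable D (p',j)"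
  shows "p = p'"
proof (rule ccontr)
  assume "p \<noteq> p'"
  then consider "p < p'" | "p' < p" by linarith
  then show False
    using addable_below[OF assms(1), of p'] addable_below[OF assms(2), of p] assms
    unfolding addable_def by cases auto
qed

lemma H_addable:
  assumes "addable D (p,j)" "j \<noteq> 1"
  shows "H D T j = hmoves D T p j"
proof -
  have "(THE p. addable D (p,j)) = p" using assms(1) addable_unique by blast
  then show ?thesis unfolding H_def using assms(2) by simp
qed

lemma frow_spec:
  fixes T :: "nat \<times> nat \<Rightarrow> nat"
  assumes "is_shape D" "addable D (p0, i+1)" "1 \<le> i"
  defines "r \<equiv> frow D T i"
  shows "(r,i) \<in> D"
    and "r = 1 \<or> (r-1,i+1) \<in> D \<and> T (r,i) < T (r-1,i+1)"
    and "\<And>p. r < p \<Longrightarrow> (p,i) \<in> D \<Longrightarrow> (p-1,i+1) \<in> D \<Longrightarrow> T (p-1,i+1) \<le> T (p,i)"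
proof -
  define P where "P r \<longleftrightarrow> (r,i) \<in> D \<and> (r = 1 \<or> tv D T (r,i) < tv D T (r-1,i+1))" for r
  have P_iff: "P r \<longleftrightarrow> (r,i) \<in> D \<and> (r = 1 \<or> (r-1,i+1) \<in> D \<and> T (r,i) < T (r-1,i+1))" for r
    unfolding P_def tv_def by auto
  have "(p0,i) \<in> D" using addable_left_neighbour[OF assms(2)] assms(3) by simp
  then have "P 1"
    using is_shape_downclosed[OF assms(1), of p0 i 1 i] assms(2,3)
    unfolding P_def addable_def by auto
  moreover have bound: "P y \<Longrightarrow> y \<le> colheight D i" for y
    using is_shape_column_iff[OF assms(1)] unfolding P_def by blast
  ultimately have "P r" and greatest: "P y \<Longrightarrow> y \<le> r" for y
    unfolding r_def frow_def P_def[symmetric]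
    by (blast intro: GreatestI_nat Greatest_le_nat)+
  then show "(r,i) \<in> D" "r = 1 \<or> (r-1,i+1) \<in> D \<and> T (r,i) < T (r-1,i+1)"
    using P_iff by auto
  show "T (p-1,i+1) \<le> T (p,i)" if "r < p" "(p,i) \<in> D" "(p-1,i+1) \<in> D" for p
    using greatest[of p] P_iff[of p] that by fastforce
qed

lemma H_Suc_eq_add_f:
  assumes "is_shape D" "addable D (p0, i+1)" "1 \<le> i"
  shows "H D T (i+1) = add_mset (f D T (i+1)) (hmoves D T (frow D T i) i)"
proof -
  define r where "r = frow D T i"
  note r = frow_spec[OF assms, of T, folded r_def]
  note col = addable_column_iff[OF assms(1,2)]
  have r_pos: "1 \<le> r" using r(1) assms(1) unfolding is_shape_def by auto
  have "r \<le> p0" using r(2) col[of "r-1"] assms(2) unfolding addable_def by auto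
  have "H D T (i+1) = hmoves D T p0 (i+1)" using H_addable[OF assms(2)] assms(3) by simp
  also have "\<dots> = hmoves D T r (i+1)"
  proof (rule hmoves_vertical_run[OF r_pos \<open>r \<le> p0\<close>])
    fix p assume "r < p" "p \<le> p0"
    moreover then have "(p-1,i+1) \<in> D" unfolding col using r_pos by linarith
    ultimately show "(p-1,i+1) \<in> D \<and> \<not> (2 \<le> i+1 \<and> (p,i+1-1) \<in> D \<and> T (p,i+1-1) < T (p-1,i+1))"
      using r(3)[of p] by (auto simp: not_less)
  qed
  also have "\<dots> = add_mset (T (r,i)) (hmoves D T r i)"
    using hmoves_horizontal_step[of "i+1" r D T] r(1,2) assms(3) by auto
  finally show ?thesis unfolding f_def r_def by simp
qed

lemma H_tjdt_eq:
  assumes "ssrt D T" "addable D (p0, i+1)" "1 \<le> i"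
  shows "H (tjdt_shape D (i+1)) (tjdt D T (i+1)) i = hmoves D T (frow D T i) i"
proof (cases "i = 1")
  case True
  then show ?thesis unfolding H_def using hmoves_first_column by simp
next
  case False
  have shD: "is_shape D" using assms(1) unfolding ssrt_def by simp
  have row: "T (p,q+1) \<le> T (p,q)" if "(p,q) \<in> D" "(p,q+1) \<in> D" for p q
    using assms(1) that unfolding ssrt_def by blast
  define r where "r = frow D T i"
  define h where "h = colheight D i"
  define D' where "D' = tjdt_shape D (i+1)"
  define T' where "T' = tjdt D T (i+1)"
  note r = frow_spec[OF shD assms(2,3), of T, folded r_def]
  have col: "(a,i) \<in> D \<longleftrightarrow> 1 \<le> a \<and> a \<le> h" for a
    using is_shape_column_iff[OF shD] unfolding h_def .
  have r_pos: "1 \<le> r" and "r \<le> h" using r(1) col by auto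
  have D': "D' = D - {(h,i)}" unfolding D'_def tjdt_shape_def h_def by simp
  have "i - 1 \<noteq> i" using assms(3) by linarith
  have T': "T' (a,b) = (if b = i \<and> r \<le> a then T (a+1,b) else T (a,b))" for a b
    unfolding T'_def tjdt_def r_def by simp
  have "addable D' (h,i)"
  proof -
    have "(h,i) \<in> D" using col[of h] r_pos \<open>r \<le> h\<close> by simp
    then have "insert (h,i) D' = D" "(h,i) \<notin> D'" unfolding D' by auto
    then show ?thesis unfolding addable_def using shD r_pos \<open>r \<le> h\<close> assms(3) by simp
  qed
  then have "H D' T' i = hmoves D' T' h i" using H_addable False by blast
  also have "\<dots> = hmoves D' T' r i"
  proof (rule hmoves_vertical_run[OF r_pos \<open>r \<le> h\<close>])
    fix p assume p: "r < p" "p \<le> h"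
    have "1 \<le> p - 1" "p - 1 < h" "r \<le> p - 1" using p r_pos by linarith+
    then have "(p-1,i) \<in> D'" unfolding D' using col[of "p-1"] by simp
    moreover have "T' (p-1,i) = T (p,i)" using T'[of "p-1" i] \<open>1 \<le> p - 1\<close> \<open>r \<le> p - 1\<close> by simp
    moreover have "T' (p,i-1) = T (p,i-1)"
      using T'[of p "i-1"] \<open>i - 1 \<noteq> i\<close> by presburger
    moreover have "T (p,i) \<le> T (p,i-1)" if "(p,i-1) \<in> D"
      using row[of p "i-1"] that col p r_pos assms(3) by simp
    ultimately show "(p-1,i) \<in> D' \<and> \<not> (2 \<le> i \<and> (p,i-1) \<in> D' \<and> T' (p,i-1) < T' (p-1,i))"
      using D' by auto
  qed
  also have "\<dots> = hmoves D T r i"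
    using \<open>r \<le> h\<close> by (intro hmoves_cong) (auto simp: D' T')
  finally show ?thesis unfolding D'_def T'_def r_def .
qed

theorem lemma6p4:
  fixes D :: "(nat \<times> nat) set" and T :: "nat \<times> nat \<Rightarrow> nat" and i :: nat
  assumes "1 \<le> i"
    and "ssrt D T"
    and "\<exists>p. addable D (p, i+1)"
  shows "H (tjdt_shape D (i+1)) (tjdt D T (i+1)) i + {# f D T (i+1) #} = H D T (i+1)"
proof -
  obtain p0 where add: "addable D (p0, i+1)" using assms(3) by blast
  have "is_shape D" using assms(2) unfolding ssrt_def by simp
  then show ?thesis
    using H_Suc_eq_add_f[OF _ add assms(1)] H_tjdt_eq[OF assms(2) add assms(1)] by simp
qed

end
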